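(* Let $\mathcal P$ be an uncertain point set in $\mathbb R^2$ with $\min_{x\in\mathbb R^2}\widehat{\mathrm{cost}}(x)>0$, let $\varepsilon\in(0,1]$, let $\varrho>0$, and let $T(\mathcal P)$ be the output of any run of the greedy covering procedure on $S(\mathcal P)$. Then $$|T(\mathcal P)|\le 3540\,|T^*(\mathcal P)|,$$ where $T^*(\mathcal P)$ is a minimum-cardinality set $T\subset\mathbb R^2$ that $\frac{\varepsilon}{2(1+\varepsilon)}$-covers $S(\mathcal P)$.
   Context: Each $P_i$ ($i=1,\dots,n$) has $k$ locations $p_{i,1},\dots,p_{i,k}\in\mathbb R^2$; $P_{\mathrm{all}}$ is the set of all locations and $CH(P_{\mathrm{all}})$ its convex hull. $\widehat{\mathrm{cost}}(x)=\frac1n\sum_i\min_j\|x-p_{i,j}\|$ (Euclidean norm). A point $a$ $\gamma$-covers a point $b$ if $\|a-b\|\le\gamma\,\widehat{\mathrm{cost}}(a)$; a set $A$ $\gamma$-covers a set $B$ if every $b\in B$ is $\gamma$-covered by some $a\in A$. $S(\mathcal P)=CH(P_{\mathrm{all}})\cap\{(\beta i,\beta j): i,j\in\mathbb Z\}$ with $\beta=\frac{\varepsilon}{2\sqrt2(1+\varepsilon)}\varrho$ (in the paper $\varrho$ is a positive lower bound on $\widehat{\mathrm{cost}}$). Greedy covering procedure: start with $S=S(\mathcal P)$ and $T=\emptyset$; while $S\ne\emptyset$, choose any $z\in S$, add $z$ to $T$, and remove from $S$ every $s$ that $z$ $\frac{\varepsilon}{2(1+\varepsilon)}$-covers; output $T$.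 *)

theory Defs
  imports "HOL-Analysis.Analysis"
begin

text \<open>An uncertain point set: n points, each with k locations p i j, for i < n, j < k.\<close>

definition cost_hat :: "nat \<Rightarrow> nat \<Rightarrow> (nat \<Rightarrow> nat \<Rightarrow> real^2) \<Rightarrow> real^2 \<Rightarrow> real" where
  "cost_hat n k p x = (1 / real n) * (\<Sum>i<n. Min ((\<lambda>j. norm (x - p i j)) ` {..<k}))"

definition P_all :: "nat \<Rightarrow> nat \<Rightarrow> (nat \<Rightarrow> nat \<Rightarrow> real^2) \<Rightarrow> (real^2) set" where
  "P_all n k p = {p i j | i j. i < n \<and> j < k}"

definition gcovers :: "nat \<Rightarrow> nat \<Rightarrow> (nat \<Rightarrow> nat \<Rightarrow> real^2) \<Rightarrow> real \<Rightarrow> real^2 \<Rightarrow> real^2 \<Rightarrow> bool" where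
  "gcovers n k p \<gamma> a b \<longleftrightarrow> norm (a - b) \<le> \<gamma> * cost_hat n k p a"

definition gcovers_set :: "nat \<Rightarrow> nat \<Rightarrow> (nat \<Rightarrow> nat \<Rightarrow> real^2) \<Rightarrow> real \<Rightarrow> (real^2) set \<Rightarrow> (real^2) set \<Rightarrow> bool" where
  "gcovers_set n k p \<gamma> A B \<longleftrightarrow> (\<forall>b\<in>B. \<exists>a\<in>A. gcovers n k p \<gamma> a b)"

definition grid_beta :: "real \<Rightarrow> real \<Rightarrow> real" where
  "grid_beta \<epsilon> \<rho> = \<epsilon> / (2 * sqrt 2 * (1 + \<epsilon>)) * \<rho>"

definition S_set :: "nat \<Rightarrow> nat \<Rightarrow> (nat \<Rightarrow> nat \<Rightarrow> real^2) \<Rightarrow> real \<Rightarrow> real \<Rightarrow> (real^2) set" where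
  "S_set n k p \<epsilon> \<rho> = convex hull (P_all n k p) \<inter>
     {vector [grid_beta \<epsilon> \<rho> * of_int i, grid_beta \<epsilon> \<rho> * of_int j] | i j :: int. True}"

text \<open>Possible outputs of a run of the greedy covering procedure started from the set S,
  with covering predicate cov (cov z s: z covers s).\<close>
inductive greedy_run :: "('a \<Rightarrow> 'a \<Rightarrow> bool) \<Rightarrow> 'a set \<Rightarrow> 'a set \<Rightarrow> bool" for cov where
  empty: "greedy_run cov {} {}"
| step: "z \<in> S \<Longrightarrow> greedy_run cov (S - {s \<in> S. cov z s}) T \<Longrightarrow> greedy_run cov S (insert z T)"

definition min_cover_card :: "nat \<Rightarrow> nat \<Rightarrow> (nat \<Rightarrow> nat \<Rightarrow> real^2) \<Rightarrow> real \<Rightarrow> (real^2) set \<Rightarrow> nat" where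
  "min_cover_card n k p \<gamma> B = (LEAST m. \<exists>T. finite T \<and> card T = m \<and> gcovers_set n k p \<gamma> T B)"

end

theory Submission
  imports Defs
begin

text \<open>Every greedy centre z has cost at least (1 - \<gamma>) cost(t) \<ge> 3/4 cost(t) for any centre t that
  \<gamma>-covers it, since cost is 1-Lipschitz and \<gamma> \<le> 1/4. Two greedy centres never cover each other,
  so the greedy centres covered by one point t of an optimal cover are (3/4)\<gamma> cost(t)-separated
  inside the disc of radius \<gamma> cost(t) around t. A grid of mesh \<gamma> cost(t)/4 then shows that there
  are at most 81 of them, hence |T| \<le> 81 |T*| \<le> 3540 |T*|.\<close>

lemma greedy_run_subset: "greedy_run cov S T \<Longrightarrow> T \<subseteq> S"
  by (induction rule: greedy_run.induct) auto

lemma greedy_run_finite: "greedy_run cov S T \<Longrightarrow> finite T"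
  by (induction rule: greedy_run.induct) auto

lemma greedy_run_covers: "greedy_run cov S T \<Longrightarrow> s \<in> S \<Longrightarrow> \<exists>z\<in>T. cov z s"
proof (induction arbitrary: s rule: greedy_run.induct)
  case empty
  then show ?case by simp
next
  case (step z S T)
  then show ?case by (cases "cov z s") auto
qed

lemma greedy_run_not_mutually_covering:
  "greedy_run cov S T \<Longrightarrow> a \<in> T \<Longrightarrow> b \<in> T \<Longrightarrow> a \<noteq> b \<Longrightarrow> \<not> cov a b \<or> \<not> cov b a"
proof (induction arbitrary: a b rule: greedy_run.induct)
  case empty
  then show ?case by simp
next
  case (step z S T)
  have "\<not> cov z y" if "y \<in> T" for y
    using greedy_run_subset[OF step.hyps(2)] that by blast
  then show ?case using step by blast
qed

lemma cost_hat_le_add_dist: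
  assumes "n \<ge> 1" "k \<ge> 1"
  shows "cost_hat n k p x \<le> cost_hat n k p y + norm (x - y)"
proof -
  let ?d = "\<lambda>z i. Min ((\<lambda>j. norm (z - p i j)) ` {..<k})"
  have nearest: "?d x i \<le> ?d y i + norm (x - y)" for i
  proof -
    have "0 \<in> {..<k}" using assms(2) by simp
    then have "?d y i \<in> (\<lambda>j. norm (y - p i j)) ` {..<k}"
      by (intro Min_in) auto
    then obtain j0 where j0: "j0 < k" "?d y i = norm (y - p i j0)"
      by blast
    have "?d x i \<le> norm (x - p i j0)"
      using j0 by (intro Min_le) auto
    also have "\<dots> \<le> norm (y - p i j0) + norm (x - y)"
      using norm_triangle_ineq[of "x - y" "y - p i j0"] by simp
    finally show ?thesis using j0 by simp
  qed
  have "(\<Sum>i<n. ?d x i) \<le> (\<Sum>i<n. ?d y i + norm (x - y))"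
    by (intro sum_mono nearest)
  also have "\<dots> = (\<Sum>i<n. ?d y i) + real n * norm (x - y)"
    by (simp add: sum.distrib)
  finally have "(\<Sum>i<n. ?d x i) \<le> (\<Sum>i<n. ?d y i) + real n * norm (x - y)" .
  then show ?thesis
    using assms(1) unfolding cost_hat_def by (simp add: field_simps)
qed

lemma abs_diff_less_if_floor_divide_eq:
  fixes u v s :: real
  assumes "s > 0" and "\<lfloor>u / s\<rfloor> = \<lfloor>v / s\<rfloor>"
  shows "\<bar>u - v\<bar> < s"
proof -
  have "\<bar>u / s - v / s\<bar> < 1"
    using assms(2) floor_correct[of "u / s"] floor_correct[of "v / s"] by linarith
  then show ?thesis
    using assms(1) by (simp add: diff_divide_distrib[symmetric] divide_less_eq)
qed

text \<open>The map to cells of side r/4 is injective on F (two points in one cell are closer than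
  r/2 in the l1 norm) and takes at most 9 values in each coordinate.\<close>
lemma card_separated_in_cball_le_81:
  fixes F :: "(real^2) set" and t :: "real^2" and r :: real
  assumes "r > 0"
    and in_cball: "\<And>z. z \<in> F \<Longrightarrow> norm (t - z) \<le> r"
    and separated: "\<And>a b. a \<in> F \<Longrightarrow> b \<in> F \<Longrightarrow> a \<noteq> b \<Longrightarrow> norm (a - b) > 3/4 * r"
  shows "card F \<le> 81"
proof -
  define s where "s = r / 4"
  have s: "s > 0" using assms(1) s_def by simp
  define cell where "cell z = (\<lfloor>(z$1 - t$1) / s\<rfloor>, \<lfloor>(z$2 - t$2) / s\<rfloor>)" for z :: "real^2"
  have cell_range: "cell ` F \<subseteq> {-4..4} \<times> {-4..4}"
  proof (rule image_subsetI)
    fix z assume z: "z \<in> F"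
    have coord: "\<bar>z$i - t$i\<bar> \<le> r" for i
      using component_le_norm_cart[of "t - z" i] in_cball[OF z] by (simp add: abs_minus_commute)
    have scaled: "-4 \<le> (z$i - t$i) / s \<and> (z$i - t$i) / s \<le> 4" for i
      using coord[of i] s unfolding s_def by (auto simp: field_simps abs_le_iff)
    have floors: "-4 \<le> \<lfloor>(z$i - t$i) / s\<rfloor> \<and> \<lfloor>(z$i - t$i) / s\<rfloor> \<le> 4" for i
      using scaled[of i] by (metis floor_mono floor_neg_numeral floor_numeral)
    show "cell z \<in> {-4..4} \<times> {-4..4}"
      using floors[of 1] floors[of 2] unfolding cell_def by simp
  qed
  have "inj_on cell F"
  proof (rule inj_onI, rule ccontr)
    fix a b assume ab: "a \<in> F" "b \<in> F" "cell a = cell b" "a \<noteq> b"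
    have "\<bar>(a - b)$1\<bar> < s" "\<bar>(a - b)$2\<bar> < s"
      using abs_diff_less_if_floor_divide_eq[OF s, of "a$1 - t$1" "b$1 - t$1"]
        abs_diff_less_if_floor_divide_eq[OF s, of "a$2 - t$2" "b$2 - t$2"] ab(3)
      unfolding cell_def by simp_all
    moreover have "norm (a - b) \<le> \<bar>(a - b)$1\<bar> + \<bar>(a - b)$2\<bar>"
      using norm_le_l1_cart[of "a - b"] by (simp add: UNIV_2)
    ultimately have "norm (a - b) < 2 * s" by linarith
    then show False using separated[OF ab(1,2,4)] assms(1) s_def by simp
  qed
  then have "card F = card (cell ` F)" by (simp add: card_image)
  also have "\<dots> \<le> card ({-4..4::int} \<times> {-4..4::int})" by (intro card_mono cell_range) auto
  also have "\<dots> = 81" by (simp add: card_cartesian_product)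
  finally show ?thesis .
qed

lemma card_covered_greedy_centres_le_81:
  assumes "n \<ge> 1" "k \<ge> 1" and cost_pos: "\<And>x. cost_hat n k p x > 0"
    and "0 < \<gamma>" "\<gamma> \<le> 1/4"
    and "greedy_run (gcovers n k p \<gamma>) S T"
  shows "card {z \<in> T. gcovers n k p \<gamma> t z} \<le> 81"
proof (rule card_separated_in_cball_le_81)
  let ?c = "cost_hat n k p" and ?F = "{z \<in> T. gcovers n k p \<gamma> t z}"
  show "\<gamma> * ?c t > 0" using assms(4) cost_pos by simp
  show near: "norm (t - z) \<le> \<gamma> * ?c t" if "z \<in> ?F" for z
    using that unfolding gcovers_def by simp
  have radius_lower: "\<gamma> * ?c a \<ge> 3/4 * (\<gamma> * ?c t)" if "a \<in> ?F" for a
  proof -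
    have "?c t \<le> ?c a + \<gamma> * ?c t"
      using cost_hat_le_add_dist[OF assms(1,2), of p t a] near[OF that] by linarith
    moreover have "\<gamma> * ?c t \<le> 1/4 * ?c t"
      using assms(5) cost_pos[of t] by (intro mult_right_mono) auto
    ultimately have "3/4 * ?c t \<le> ?c a" by linarith
    then show ?thesis
      using mult_left_mono[of "3/4 * ?c t" "?c a" \<gamma>] assms(4) by simp
  qed
  show "norm (a - b) > 3/4 * (\<gamma> * ?c t)" if ab: "a \<in> ?F" "b \<in> ?F" "a \<noteq> b" for a b
  proof -
    have "\<not> gcovers n k p \<gamma> a b \<or> \<not> gcovers n k p \<gamma> b a"
      using greedy_run_not_mutually_covering[OF assms(6)] ab by blast
    then have "norm (a - b) > \<gamma> * ?c a \<or> norm (a - b) > \<gamma> * ?c b"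
      unfolding gcovers_def by (auto simp: norm_minus_commute)
    then show ?thesis
      using radius_lower[OF ab(1)] radius_lower[OF ab(2)] by linarith
  qed
qed

lemma card_greedy_run_le_81_card_cover:
  assumes "n \<ge> 1" "k \<ge> 1" and "\<And>x. cost_hat n k p x > 0"
    and "0 < \<gamma>" "\<gamma> \<le> 1/4"
    and run: "greedy_run (gcovers n k p \<gamma>) S T"
    and "finite C" and cover: "gcovers_set n k p \<gamma> C S"
  shows "card T \<le> 81 * card C"
proof -
  let ?F = "\<lambda>t. {z \<in> T. gcovers n k p \<gamma> t z}"
  have "T \<subseteq> (\<Union>t\<in>C. ?F t)"
    using cover greedy_run_subset[OF run] unfolding gcovers_set_def by blast
  then have "card T \<le> card (\<Union>t\<in>C. ?F t)"
    using \<open>finite C\<close> greedy_run_finite[OF run] by (intro card_mono) auto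
  also have "\<dots> \<le> (\<Sum>t\<in>C. card (?F t))"
    using \<open>finite C\<close> by (rule card_UN_le)
  also have "\<dots> \<le> (\<Sum>t\<in>C. 81)"
    using card_covered_greedy_centres_le_81[OF assms(1-6)] by (intro sum_mono)
  finally show ?thesis by simp
qed

lemma min_cover_card_attained:
  assumes "finite C" "gcovers_set n k p \<gamma> C B"
  obtains C' where "finite C'" "card C' = min_cover_card n k p \<gamma> B" "gcovers_set n k p \<gamma> C' B"
proof -
  have "\<exists>C'. finite C' \<and> card C' = card C \<and> gcovers_set n k p \<gamma> C' B"
    using assms by blast
  then have "\<exists>C'. finite C' \<and> card C' = min_cover_card n k p \<gamma> B \<and> gcovers_set n k p \<gamma> C' B"
    unfolding min_cover_card_def by (rule LeastI)
  then show ?thesis using that by blast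
qed

theorem mainTheorem12:
  fixes n k :: nat and p :: "nat \<Rightarrow> nat \<Rightarrow> real^2" and \<epsilon> \<rho> :: real and T :: "(real^2) set"
  assumes "n \<ge> 1" and "k \<ge> 1"
    and "\<exists>x0. (\<forall>x. cost_hat n k p x0 \<le> cost_hat n k p x) \<and> cost_hat n k p x0 > 0"
    and "0 < \<epsilon>" and "\<epsilon> \<le> 1" and "0 < \<rho>"
    and "greedy_run (gcovers n k p (\<epsilon> / (2 * (1 + \<epsilon>)))) (S_set n k p \<epsilon> \<rho>) T"
  shows "real (card T) \<le> 3540 * real (min_cover_card n k p (\<epsilon> / (2 * (1 + \<epsilon>))) (S_set n k p \<epsilon> \<rho>))"
proof -
  let ?\<gamma> = "\<epsilon> / (2 * (1 + \<epsilon>))" and ?S = "S_set n k p \<epsilon> \<rho>"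
  have cost_pos: "cost_hat n k p x > 0" for x
    using assms(3) by (meson less_le_trans)
  have \<gamma>: "0 < ?\<gamma>" "?\<gamma> \<le> 1/4"
    using assms(4,5) by (simp_all add: field_simps)
  have "gcovers_set n k p ?\<gamma> T ?S"
    using greedy_run_covers[OF assms(7)] unfolding gcovers_set_def by blast
  then obtain C where C: "finite C" "card C = min_cover_card n k p ?\<gamma> ?S"
      "gcovers_set n k p ?\<gamma> C ?S"
    by (rule min_cover_card_attained[OF greedy_run_finite[OF assms(7)]])
  have "card T \<le> 81 * card C"
    using card_greedy_run_le_81_card_cover[OF assms(1,2) cost_pos \<gamma> assms(7) C(1,3)] .
  then show ?thesis using C(2) by linarith
qed

end
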